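(* Let $I$ be a closed ideal of $A^+$ and let $f\in A^+$ with $f|_\Gamma\in I^A$. Then the division ideal $I(f)=\{g\in A^+: fg\in I\}$ is weak-$*$ closed in $A^+$.
   Context: $\Gamma$ is the unit circle, $A(\Gamma)$ the algebra of continuous functions on $\Gamma$ with absolutely convergent Fourier series, $A^+=\{f\in A(\Gamma):\hat f(n)=0\ (n<0)\}$. $I^A$ is the closed ideal of $A(\Gamma)$ generated by $I$. The weak-$*$ topology on $A^+$ is obtained by identifying $A^+$ via $f\mapsto(\hat f(n))_{n\ge0}$ with $\ell^1(\mathbb N)$, the dual of $c_0(\mathbb N)$. *)

theory Defs
  imports "HOL-Analysis.Analysis"
begin

text \<open>Model: an element of the Wiener algebra A(Gamma) is identified with its sequence of
Fourier coefficients (int => complex), an absolutely summable sequence; the function on the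
circle is z |-> sum_n a n * z^n.  Multiplication of functions corresponds to convolution.\<close>

definition Wiener :: "(int \<Rightarrow> complex) set" where
  "Wiener = {a. (\<lambda>n. norm (a n)) summable_on UNIV}"

definition Wnorm :: "(int \<Rightarrow> complex) \<Rightarrow> real" where
  "Wnorm a = (\<Sum>\<^sub>\<infinity>n. norm (a n))"

definition conv :: "(int \<Rightarrow> complex) \<Rightarrow> (int \<Rightarrow> complex) \<Rightarrow> (int \<Rightarrow> complex)" where
  "conv a b = (\<lambda>n. \<Sum>\<^sub>\<infinity>k. a k * b (n - k))"

definition Aplus :: "(int \<Rightarrow> complex) set" where
  "Aplus = {a \<in> Wiener. \<forall>n<0. a n = 0}"

definition Wclosed :: "(int \<Rightarrow> complex) set \<Rightarrow> bool" where
  "Wclosed S \<longleftrightarrow> (\<forall>x a. (\<forall>k. x k \<in> S) \<longrightarrow> a \<in> Wiener \<longrightarrow>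
      (\<lambda>k. Wnorm (\<lambda>n. x k n - a n)) \<longlonglongrightarrow> 0 \<longrightarrow> a \<in> S)"

definition closed_ideal_Aplus :: "(int \<Rightarrow> complex) set \<Rightarrow> bool" where
  "closed_ideal_Aplus I \<longleftrightarrow> I \<subseteq> Aplus \<and> (\<lambda>n. 0) \<in> I \<and>
     (\<forall>a\<in>I. \<forall>b\<in>I. (\<lambda>n. a n + b n) \<in> I) \<and>
     (\<forall>c. \<forall>a\<in>I. (\<lambda>n. c * a n) \<in> I) \<and>
     (\<forall>g\<in>Aplus. \<forall>a\<in>I. conv g a \<in> I) \<and> Wclosed I"

definition closed_ideal_A :: "(int \<Rightarrow> complex) set \<Rightarrow> bool" where
  "closed_ideal_A J \<longleftrightarrow> J \<subseteq> Wiener \<and> (\<lambda>n. 0) \<in> J \<and>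
     (\<forall>a\<in>J. \<forall>b\<in>J. (\<lambda>n. a n + b n) \<in> J) \<and>
     (\<forall>c. \<forall>a\<in>J. (\<lambda>n. c * a n) \<in> J) \<and>
     (\<forall>g\<in>Wiener. \<forall>a\<in>J. conv g a \<in> J) \<and> Wclosed J"

definition IA :: "(int \<Rightarrow> complex) set \<Rightarrow> (int \<Rightarrow> complex) set" where
  "IA I = \<Inter>{J. closed_ideal_A J \<and> I \<subseteq> J}"

definition div_ideal :: "(int \<Rightarrow> complex) set \<Rightarrow> (int \<Rightarrow> complex) \<Rightarrow> (int \<Rightarrow> complex) set" where
  "div_ideal I f = {g \<in> Aplus. conv f g \<in> I}"

text \<open>l^1(N) and its weak-* topology as the dual of c_0(N): the coarsest topology on l^1(N)
making all functionals x |-> sum_n x n * c n (c in c_0) continuous.\<close>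
definition l1N :: "(nat \<Rightarrow> complex) set" where
  "l1N = {x. (\<lambda>n. norm (x n)) summable_on UNIV}"

definition weakstar_l1N :: "(nat \<Rightarrow> complex) topology" where
  "weakstar_l1N = subtopology
     (topology_generated_by {{x. (\<Sum>\<^sub>\<infinity>n. x n * c n) \<in> U} | c U. c \<longlonglongrightarrow> 0 \<and> open U}) l1N"

definition coeffs_plus :: "(int \<Rightarrow> complex) \<Rightarrow> (nat \<Rightarrow> complex)" where
  "coeffs_plus f = (\<lambda>n. f (int n))"

end

theory Submission
  imports Defs "HOL-Library.Nat_Bijection"
begin

text \<open>
  Identify \<open>A\<^sup>+\<close> with \<open>\<ell>\<^sup>1(\<nat>)\<close>, whose dual is \<open>\<ell>\<^sup>\<infinity>(\<nat>)\<close>. By Hahn--Banach, \<open>g \<in> A\<^sup>+\<close> lies in \<open>I(f)\<close>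
  iff \<open>\<langle>\<phi>, f g\<rangle> = 0\<close> for every bounded \<open>\<phi>\<close> annihilating \<open>I\<close>, and by Fubini
  \<open>\<langle>\<phi>, f g\<rangle> = \<Sum>\<^sub>m g\<^sub>m \<psi>\<^sub>\<phi>(m)\<close> with \<open>\<psi>\<^sub>\<phi>(m) = \<langle>\<phi>, z\<^sup>m f\<rangle>\<close>. The \<open>F \<in> A(\<Gamma>)\<close> with
  \<open>\<langle>\<phi>, z\<^sup>m F\<rangle> \<rightarrow> 0\<close> form a closed ideal of \<open>A(\<Gamma>)\<close> containing \<open>I\<close>, hence containing \<open>f \<in> I\<^sup>A\<close>. So every
  \<open>\<psi>\<^sub>\<phi>\<close> lies in \<open>c\<^sub>0\<close>, and \<open>I(f)\<close> is an intersection of kernels of weak-* continuous functionals.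
  Hahn--Banach is proved directly: the real functional is extended along the real basis
  \<open>e\<^sub>0, i e\<^sub>0, e\<^sub>1, i e\<^sub>1, \<dots>\<close> one vector at a time, then complexified.
\<close>

section \<open>The Wiener algebra\<close>

lemma Wiener_add:
  assumes "x \<in> Wiener" "y \<in> Wiener"
  shows "(\<lambda>n. x n + y n) \<in> Wiener"
proof -
  have "(\<lambda>n. norm (x n) + norm (y n)) summable_on UNIV"
    using assms unfolding Wiener_def by (intro summable_on_add) auto
  then show ?thesis unfolding Wiener_def mem_Collect_eq
    by (rule summable_on_comparison_test) (auto simp: norm_triangle_ineq)
qed

lemma Wiener_cmult: "x \<in> Wiener \<Longrightarrow> (\<lambda>n. c * x n) \<in> Wiener"
  unfolding Wiener_def by (simp add: norm_mult summable_on_cmult_right)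

lemma Wiener_diff: "x \<in> Wiener \<Longrightarrow> y \<in> Wiener \<Longrightarrow> (\<lambda>n. x n - y n) \<in> Wiener"
  using Wiener_add[OF _ Wiener_cmult[of y "-1"], of x] by simp

lemma Wiener_sum: "(\<And>j. j \<in> J \<Longrightarrow> x j \<in> Wiener) \<Longrightarrow> (\<lambda>n. \<Sum>j\<in>J. x j n) \<in> Wiener"
proof (induction J rule: infinite_finite_induct)
  case (insert j J)
  then show ?case using Wiener_add[of "x j" "\<lambda>n. \<Sum>j\<in>J. x j n"] by simp
qed (simp_all add: Wiener_def)

lemma Wiener_finite_support:
  assumes "finite S" "\<And>n. n \<notin> S \<Longrightarrow> x n = 0"
  shows "x \<in> Wiener"
proof -
  have "(\<lambda>n. norm (x n)) summable_on S" using assms(1) by simp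
  then show ?thesis
    unfolding Wiener_def mem_Collect_eq by (rule summable_on_cong_neutral[THEN iffD1, rotated -1]) (auto simp: assms(2))
qed

lemma Aplus_Wiener: "x \<in> Aplus \<Longrightarrow> x \<in> Wiener"
  unfolding Aplus_def by simp

lemma Aplus_neg: "x \<in> Aplus \<Longrightarrow> n < 0 \<Longrightarrow> x n = 0"
  unfolding Aplus_def by simp

definition coeff_subspace :: "(int \<Rightarrow> complex) set \<Rightarrow> bool" where
  "coeff_subspace M \<longleftrightarrow> (\<lambda>n. 0) \<in> M \<and> (\<forall>x\<in>M. \<forall>y\<in>M. (\<lambda>n. x n + y n) \<in> M) \<and>
     (\<forall>c. \<forall>x\<in>M. (\<lambda>n. c * x n) \<in> M)"

lemma closed_ideal_AplusD:
  assumes "closed_ideal_Aplus I"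
  shows "I \<subseteq> Aplus" "coeff_subspace I" "\<And>g x. g \<in> Aplus \<Longrightarrow> x \<in> I \<Longrightarrow> conv g x \<in> I" "Wclosed I"
  using assms unfolding closed_ideal_Aplus_def coeff_subspace_def by auto

lemma Wnorm_nonneg: "0 \<le> Wnorm x"
  unfolding Wnorm_def by (rule infsum_nonneg) simp

lemma Wnorm_add_le:
  assumes "x \<in> Wiener" "y \<in> Wiener"
  shows "Wnorm (\<lambda>n. x n + y n) \<le> Wnorm x + Wnorm y"
proof -
  have "Wnorm (\<lambda>n. x n + y n) \<le> (\<Sum>\<^sub>\<infinity>n. norm (x n) + norm (y n))"
    unfolding Wnorm_def using Wiener_add[OF assms] assms unfolding Wiener_def
    by (intro infsum_mono summable_on_add) (auto simp: norm_triangle_ineq)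
  also have "\<dots> = Wnorm x + Wnorm y"
    unfolding Wnorm_def using assms unfolding Wiener_def by (intro infsum_add) auto
  finally show ?thesis .
qed

lemma Wnorm_cmult: "Wnorm (\<lambda>n. c * x n) = norm c * Wnorm x"
  unfolding Wnorm_def by (simp add: norm_mult infsum_cmult_right')

lemma Wnorm_minus_commute: "Wnorm (\<lambda>n. x n - y n) = Wnorm (\<lambda>n. y n - x n)"
  unfolding Wnorm_def by (simp add: norm_minus_commute)

lemma norm_le_Wnorm:
  assumes "x \<in> Wiener"
  shows "norm (x n) \<le> Wnorm x"
proof -
  have "(\<Sum>\<^sub>\<infinity>m\<in>{n}. norm (x m)) \<le> (\<Sum>\<^sub>\<infinity>m. norm (x m))"
    using assms unfolding Wiener_def by (intro infsum_mono_neutral) auto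
  then show ?thesis unfolding Wnorm_def by simp
qed

lemma summable_on_nonneg_part:
  fixes x :: "int \<Rightarrow> 'a::banach"
  assumes "x summable_on UNIV"
  shows "(\<lambda>k. x (int k)) summable_on UNIV"
proof -
  have "x summable_on range int" using assms by (rule summable_on_subset_banach) auto
  then show ?thesis using summable_on_reindex[of int UNIV x] by (simp add: o_def)
qed

lemma infsum_nonneg_part:
  fixes x :: "int \<Rightarrow> 'a::{comm_monoid_add, t2_space}"
  assumes "\<And>n. n < 0 \<Longrightarrow> x n = 0"
  shows "(\<Sum>\<^sub>\<infinity>k. x (int k)) = (\<Sum>\<^sub>\<infinity>n. x n)"
proof -
  have "n \<in> range int" if "x n \<noteq> 0" for n
    using assms[of n] that by (metis nonneg_int_cases not_less rangeI)
  then have "(\<Sum>\<^sub>\<infinity>n. x n) = (\<Sum>\<^sub>\<infinity>n\<in>range int. x n)"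
    by (intro infsum_cong_neutral) auto
  then show ?thesis using infsum_reindex[of int UNIV x] by (simp add: o_def)
qed

lemma infsum_nonneg_part_le_Wnorm:
  assumes "x \<in> Wiener"
  shows "(\<Sum>\<^sub>\<infinity>k. norm (x (int k))) \<le> Wnorm x"
proof -
  have "(\<Sum>\<^sub>\<infinity>k. norm (x (int k))) = (\<Sum>\<^sub>\<infinity>n\<in>range int. norm (x n))"
    using infsum_reindex[of int UNIV "\<lambda>n. norm (x n)"] by (simp add: o_def)
  also have "\<dots> \<le> Wnorm x"
    unfolding Wnorm_def using assms unfolding Wiener_def
    by (intro infsum_mono_neutral) (auto intro: summable_on_subset_banach)
  finally show ?thesis .
qed

definition truncation :: "nat \<Rightarrow> (int \<Rightarrow> complex) \<Rightarrow> int \<Rightarrow> complex" where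
  "truncation N x = (\<lambda>n. if 0 \<le> n \<and> n < int N then x n else 0)"

lemma Wnorm_sub_truncation_tendsto_zero:
  assumes x: "x \<in> Aplus"
  shows "(\<lambda>N. Wnorm (\<lambda>n. x n - truncation N x n)) \<longlonglongrightarrow> 0"
proof -
  let ?a = "\<lambda>n. norm (x n)"
  have x_abs: "?a summable_on UNIV" using x unfolding Aplus_def Wiener_def by simp
  have tail_eq: "Wnorm (\<lambda>n. x n - truncation N x n) = Wnorm x - (\<Sum>k<N. ?a (int k))" for N
  proof -
    let ?S = "{0..<int N}"
    have "Wnorm x = infsum ?a ?S + infsum ?a (UNIV - ?S)"
      unfolding Wnorm_def
      by (subst infsum_Un_disjoint[symmetric]) (auto intro: summable_on_subset_banach[OF x_abs])
    moreover have "?S = int ` {..<N}"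
      by (auto simp: image_iff) (metis lessThan_iff nat_less_iff nonneg_int_cases of_nat_less_iff)
    then have "infsum ?a ?S = (\<Sum>k<N. ?a (int k))" by (simp add: sum.reindex)
    moreover have "infsum ?a (UNIV - ?S) = Wnorm (\<lambda>n. x n - truncation N x n)"
      unfolding Wnorm_def by (rule infsum_cong_neutral) (auto simp: truncation_def)
    ultimately show ?thesis by simp
  qed
  have "(\<lambda>N. \<Sum>k<N. ?a (int k)) \<longlonglongrightarrow> (\<Sum>\<^sub>\<infinity>k. ?a (int k))"
    using has_sum_imp_sums[OF has_sum_infsum[OF summable_on_nonneg_part[OF x_abs]]]
    unfolding sums_def .
  moreover have "(\<Sum>\<^sub>\<infinity>k. ?a (int k)) = Wnorm x"
    unfolding Wnorm_def by (rule infsum_nonneg_part) (use x in \<open>simp add: Aplus_neg\<close>)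
  ultimately have "(\<lambda>N. Wnorm x - (\<Sum>k<N. ?a (int k))) \<longlonglongrightarrow> Wnorm x - Wnorm x"
    by (intro tendsto_diff) auto
  then show ?thesis unfolding tail_eq by simp
qed

text \<open>Multiplication by \<open>z\<^sup>j\<close>.\<close>
definition shift_coeffs :: "int \<Rightarrow> (int \<Rightarrow> complex) \<Rightarrow> int \<Rightarrow> complex" where
  "shift_coeffs j x = (\<lambda>n. x (n - j))"

lemma shift_coeffs_0 [simp]: "shift_coeffs 0 x = x"
  by (simp add: shift_coeffs_def)

lemma shift_coeffs_bij: "bij_betw (\<lambda>n. n - j) UNIV (UNIV :: int set)"
  by (rule bij_betwI[of _ _ _ "\<lambda>n. n + j"]) auto

lemma Wnorm_shift_coeffs: "Wnorm (shift_coeffs j x) = Wnorm x"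
  unfolding Wnorm_def shift_coeffs_def
  using infsum_reindex_bij_betw[OF shift_coeffs_bij, of "\<lambda>n. norm (x n)"] by simp

lemma Wiener_shift_coeffs: "x \<in> Wiener \<Longrightarrow> shift_coeffs j x \<in> Wiener"
  unfolding Wiener_def shift_coeffs_def
  using summable_on_reindex_bij_betw[OF shift_coeffs_bij, of "\<lambda>n. norm (x n)"] by simp

lemma shift_coeffs_add: "shift_coeffs j (\<lambda>n. x n + y n) = (\<lambda>n. shift_coeffs j x n + shift_coeffs j y n)"
  by (simp add: shift_coeffs_def)

lemma shift_coeffs_cmult: "shift_coeffs j (\<lambda>n. c * x n) = (\<lambda>n. c * shift_coeffs j x n)"
  by (simp add: shift_coeffs_def)

section \<open>Pairing with bounded sequences\<close>

text \<open>Bounded \<open>\<phi>\<close> represent the dual of \<open>A\<^sup>+\<close>; the pairing ignores negative coefficients.\<close>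
definition dual_pairing :: "(nat \<Rightarrow> complex) \<Rightarrow> (int \<Rightarrow> complex) \<Rightarrow> complex" where
  "dual_pairing \<phi> x = (\<Sum>\<^sub>\<infinity>k. \<phi> k * x (int k))"

lemma dual_pairing_abs_summable:
  assumes "\<And>k. norm (\<phi> k) \<le> B" "x \<in> Wiener"
  shows "(\<lambda>k. norm (\<phi> k * x (int k))) summable_on UNIV"
proof -
  have "(\<lambda>k. norm (x (int k))) summable_on UNIV"
    using summable_on_nonneg_part assms(2) unfolding Wiener_def by blast
  from summable_on_cmult_right[OF this, of B] show ?thesis
    by (rule summable_on_comparison_test) (auto simp: norm_mult intro!: mult_right_mono assms(1))
qed

lemma dual_pairing_summable:
  "(\<And>k. norm (\<phi> k) \<le> B) \<Longrightarrow> x \<in> Wiener \<Longrightarrow> (\<lambda>k. \<phi> k * x (int k)) summable_on UNIV"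
  by (rule abs_summable_summable) (rule dual_pairing_abs_summable)

lemma norm_dual_pairing_le:
  assumes B: "\<And>k. norm (\<phi> k) \<le> B" and x: "x \<in> Wiener"
  shows "norm (dual_pairing \<phi> x) \<le> B * Wnorm x"
proof -
  have B0: "0 \<le> B" using norm_ge_zero order_trans B by blast
  have xs: "(\<lambda>k. norm (x (int k))) summable_on UNIV"
    using summable_on_nonneg_part x unfolding Wiener_def by blast
  have "norm (dual_pairing \<phi> x) \<le> (\<Sum>\<^sub>\<infinity>k. norm (\<phi> k * x (int k)))"
    unfolding dual_pairing_def by (rule norm_infsum_bound[OF dual_pairing_abs_summable[of \<phi> B, OF B x]])
  also have "\<dots> \<le> (\<Sum>\<^sub>\<infinity>k. B * norm (x (int k)))"
    by (rule infsum_mono[OF dual_pairing_abs_summable[of \<phi> B, OF B x] summable_on_cmult_right[OF xs]])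
       (auto simp: norm_mult intro!: mult_right_mono B)
  also have "\<dots> \<le> B * Wnorm x"
    using infsum_nonneg_part_le_Wnorm[OF x] B0 by (simp add: infsum_cmult_right' mult_left_mono)
  finally show ?thesis .
qed

lemma dual_pairing_sums:
  "(\<And>k. norm (\<phi> k) \<le> B) \<Longrightarrow> x \<in> Wiener \<Longrightarrow> (\<lambda>k. \<phi> k * x (int k)) sums dual_pairing \<phi> x"
  unfolding dual_pairing_def by (intro has_sum_imp_sums has_sum_infsum dual_pairing_summable)

lemma dual_pairing_add:
  "(\<And>k. norm (\<phi> k) \<le> B) \<Longrightarrow> x \<in> Wiener \<Longrightarrow> y \<in> Wiener \<Longrightarrow>
    dual_pairing \<phi> (\<lambda>n. x n + y n) = dual_pairing \<phi> x + dual_pairing \<phi> y"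
  unfolding dual_pairing_def distrib_left by (intro infsum_add dual_pairing_summable)

lemma dual_pairing_cmult: "dual_pairing \<phi> (\<lambda>n. c * x n) = c * dual_pairing \<phi> x"
  unfolding dual_pairing_def by (simp add: infsum_cmult_right'[symmetric] mult.left_commute)

lemma dual_pairing_zero [simp]: "dual_pairing \<phi> (\<lambda>n. 0) = 0"
  unfolding dual_pairing_def by simp

section \<open>Convolution\<close>

lemma abs_summable_product:
  assumes "F \<in> Wiener" "G \<in> Wiener"
  shows "(\<lambda>p. norm (F (fst p)) * norm (G (snd p))) summable_on UNIV"
proof -
  let ?f = "\<lambda>p. norm (F (fst p)) * norm (G (snd p))"
  have "?f summable_on UNIV \<times> UNIV"
  proof (rule summable_on_SigmaI)
    show "((\<lambda>l. ?f (k, l)) has_sum (norm (F k) * Wnorm G)) UNIV" for k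
      using assms(2) unfolding Wiener_def Wnorm_def by (simp add: has_sum_cmult_right)
    show "(\<lambda>k. norm (F k) * Wnorm G) summable_on UNIV"
      using assms(1) unfolding Wiener_def by (simp add: summable_on_cmult_left)
  qed auto
  then show ?thesis by simp
qed

lemma abs_summable_product_reindex:
  assumes "F \<in> Wiener" "G \<in> Wiener" "inj h"
  shows "(\<lambda>p. norm (F (fst (h p))) * norm (G (snd (h p)))) summable_on UNIV"
proof -
  have "(\<lambda>p. norm (F (fst p)) * norm (G (snd p))) summable_on range h"
    using abs_summable_product[OF assms(1,2)] by (rule summable_on_subset_banach) auto
  with summable_on_reindex[OF assms(3), of "\<lambda>p. norm (F (fst p)) * norm (G (snd p))"]
  show ?thesis by (simp add: o_def)
qed

lemma conv_abs_summable:
  assumes "F \<in> Wiener" "G \<in> Wiener"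
  shows "(\<lambda>k. norm (F k * G (n - k))) summable_on UNIV"
proof -
  have "(\<lambda>k. norm (F k) * Wnorm G) summable_on UNIV"
    using assms(1) unfolding Wiener_def by (simp add: summable_on_cmult_left)
  then show ?thesis
    by (rule summable_on_comparison_test)
       (auto simp: norm_mult intro!: mult_left_mono norm_le_Wnorm assms)
qed

lemma Wiener_conv:
  assumes "F \<in> Wiener" "G \<in> Wiener"
  shows "conv F G \<in> Wiener"
proof -
  have "inj (\<lambda>(n::int, k::int). (k, n - k))"
    by (auto simp: inj_def)
  from abs_summable_product_reindex[OF assms this]
  have "(\<lambda>(n, k). norm (F k) * norm (G (n - k))) summable_on UNIV \<times> UNIV"
    by (simp add: case_prod_unfold)
  then have "(\<lambda>n. \<Sum>\<^sub>\<infinity>k. norm (F k) * norm (G (n - k))) summable_on UNIV"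
    using summable_on_Sigma_banach by fastforce
  then show ?thesis unfolding Wiener_def mem_Collect_eq
  proof (rule summable_on_comparison_test)
    show "norm (conv F G n) \<le> (\<Sum>\<^sub>\<infinity>k. norm (F k) * norm (G (n - k)))" for n
      unfolding conv_def using norm_infsum_bound[OF conv_abs_summable[OF assms, of n]]
      by (simp add: norm_mult)
  qed simp
qed

lemma conv_commute: "conv F G = conv G F"
proof
  fix n
  have "bij_betw (\<lambda>k. n - k) UNIV (UNIV :: int set)"
    by (rule bij_betwI[of _ _ _ "\<lambda>k. n - k"]) auto
  from infsum_reindex_bij_betw[OF this, of "\<lambda>k. F k * G (n - k)"]
  show "conv F G n = conv G F n"
    unfolding conv_def
    by (simp add: mult.commute)
qed

lemma Aplus_conv:
  assumes "F \<in> Aplus" "G \<in> Aplus"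
  shows "conv F G \<in> Aplus"
proof -
  have "conv F G n = 0" if "n < 0" for n
  proof -
    have "F k * G (n - k) = 0" for k
      using that assms by (cases "k < 0") (auto simp: Aplus_neg)
    then show ?thesis unfolding conv_def by (intro infsum_0) simp
  qed
  then show ?thesis
    unfolding Aplus_def using Wiener_conv[OF Aplus_Wiener Aplus_Wiener] assms by auto
qed

lemma conv_delta: "conv (\<lambda>n. if n = j then 1 else 0) x = shift_coeffs j x"
proof
  fix n
  have "conv (\<lambda>n. if n = j then 1 else 0) x n = (\<Sum>\<^sub>\<infinity>k\<in>{j}. (if k = j then 1 else 0) * x (n - k))"
    unfolding conv_def by (rule infsum_cong_neutral) auto
  then show "conv (\<lambda>n. if n = j then 1 else 0) x n = shift_coeffs j x n"
    by (simp add: shift_coeffs_def)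
qed

lemma delta_Aplus: "(\<lambda>n. if n = int m then 1 else 0) \<in> Aplus"
  unfolding Aplus_def using Wiener_finite_support[of "{int m}"] by auto

text \<open>Fubini: the inner sums are dominated by \<open>B |F k| |G l|\<close>, which is summable on pairs.\<close>
lemma dual_pairing_shift_conv:
  assumes B: "\<And>k. norm (\<phi> k) \<le> B" and F: "F \<in> Wiener" and G: "G \<in> Wiener"
  shows "dual_pairing \<phi> (shift_coeffs j (conv F G)) =
    (\<Sum>\<^sub>\<infinity>k. F k * dual_pairing \<phi> (shift_coeffs (j + k) G))"
proof -
  define f where "f = (\<lambda>(n::nat) (k::int). \<phi> n * (F k * G (int n - j - k)))"
  have "inj (\<lambda>(n::nat, k::int). (k, int n - j - k))"
    by (auto simp: inj_def)
  from summable_on_cmult_right[OF abs_summable_product_reindex[OF F G this], of B]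
  have "(\<lambda>(n, k). norm (f n k)) summable_on UNIV"
    by (rule summable_on_comparison_test)
       (auto simp: f_def norm_mult intro!: mult_right_mono B)
  then have f_summable: "(\<lambda>(n, k). f n k) summable_on UNIV \<times> UNIV"
    using abs_summable_summable by (simp add: case_prod_unfold)
  have "dual_pairing \<phi> (shift_coeffs j (conv F G)) = (\<Sum>\<^sub>\<infinity>n. \<Sum>\<^sub>\<infinity>k. f n k)"
    unfolding dual_pairing_def shift_coeffs_def conv_def f_def infsum_cmult_right'[symmetric]
    by (simp add: algebra_simps)
  also have "\<dots> = (\<Sum>\<^sub>\<infinity>k. \<Sum>\<^sub>\<infinity>n. f n k)"
    by (rule infsum_swap_banach[OF f_summable])
  also have "\<dots> = (\<Sum>\<^sub>\<infinity>k. F k * dual_pairing \<phi> (shift_coeffs (j + k) G))"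
    unfolding dual_pairing_def shift_coeffs_def f_def
    by (simp add: infsum_cmult_right'[symmetric] algebra_simps)
  finally show ?thesis .
qed

lemma dual_pairing_conv:
  assumes B: "\<And>k. norm (\<phi> k) \<le> B" and f: "f \<in> Wiener" and g: "g \<in> Aplus"
  shows "dual_pairing \<phi> (conv f g) =
    (\<Sum>\<^sub>\<infinity>m. coeffs_plus g m * dual_pairing \<phi> (shift_coeffs (int m) f))"
proof -
  have "dual_pairing \<phi> (conv f g) = dual_pairing \<phi> (shift_coeffs 0 (conv g f))"
    by (simp add: conv_commute)
  also have "\<dots> = (\<Sum>\<^sub>\<infinity>k. g k * dual_pairing \<phi> (shift_coeffs k f))"
    using dual_pairing_shift_conv[of \<phi> B, OF B Aplus_Wiener[OF g] f, of 0] by simp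
  also have "\<dots> = (\<Sum>\<^sub>\<infinity>m. g (int m) * dual_pairing \<phi> (shift_coeffs (int m) f))"
    by (rule infsum_nonneg_part[symmetric]) (use g in \<open>simp add: Aplus_neg\<close>)
  finally show ?thesis by (simp add: coeffs_plus_def)
qed

section \<open>The ideal of decaying pairings\<close>

lemma tendsto_zero_uniform_approx:
  fixes f :: "'a \<Rightarrow> 'b::real_normed_vector"
  assumes "\<And>e. e > 0 \<Longrightarrow> \<exists>g. (g \<longlongrightarrow> 0) F \<and> (\<forall>x. norm (f x - g x) \<le> e)"
  shows "(f \<longlongrightarrow> 0) F"
  unfolding tendsto_iff dist_norm diff_zero
proof (intro allI impI)
  fix e :: real assume "e > 0"
  then obtain g where g: "(g \<longlongrightarrow> 0) F" "\<And>x. norm (f x - g x) \<le> e / 2"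
    using assms[of "e / 2"] by auto
  have "e / 2 > 0" using \<open>e > 0\<close> by simp
  with g(1) have "eventually (\<lambda>x. dist (g x) 0 < e / 2) F"
    unfolding tendsto_iff by blast
  then show "eventually (\<lambda>x. norm (f x) < e) F"
  proof eventually_elim
    case (elim x)
    with g(2)[of x] norm_triangle_ineq[of "f x - g x" "g x"] show ?case by (simp add: dist_norm)
  qed
qed

lemma tendsto_int_add_const:
  assumes "(\<lambda>m. b (int m)) \<longlonglongrightarrow> l"
  shows "(\<lambda>m. b (int m + c)) \<longlonglongrightarrow> l"
proof -
  have "filterlim (\<lambda>m. int m + c) at_top sequentially"
    unfolding filterlim_at_top
  proof
    fix C :: int
    show "eventually (\<lambda>m. C \<le> int m + c) sequentially"
      using eventually_ge_at_top[of "nat (C - c)"] by eventually_elim linarith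
  qed
  with filterlim_int_of_nat_at_topD[OF assms] show ?thesis by (rule filterlim_compose)
qed

lemma infsum_int_eq_suminf:
  fixes a :: "int \<Rightarrow> 'a::banach"
  assumes "a summable_on UNIV"
  shows "(\<Sum>\<^sub>\<infinity>k. a k) = (\<Sum>n. a (int_decode n))"
proof -
  have "(a has_sum (\<Sum>\<^sub>\<infinity>k. a k)) UNIV" using assms by (rule has_sum_infsum)
  then have "((\<lambda>n. a (int_decode n)) has_sum (\<Sum>\<^sub>\<infinity>k. a k)) UNIV"
    using has_sum_reindex_bij_betw[OF bij_int_decode, of a] by simp
  then show ?thesis by (simp add: has_sum_imp_sums sums_unique)
qed

text \<open>Tannery's theorem, after enumerating \<open>\<int>\<close> by \<open>int_decode\<close>.\<close>
lemma conv_bounded_tendsto_zero: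
  assumes g: "g \<in> Wiener" and K: "\<And>j. norm (b j) \<le> K" and b: "(\<lambda>m. b (int m)) \<longlonglongrightarrow> 0"
  shows "(\<lambda>m. \<Sum>\<^sub>\<infinity>k. g k * b (int m + k)) \<longlonglongrightarrow> 0"
proof -
  have g_abs: "(\<lambda>k. norm (g k)) summable_on UNIV" using g unfolding Wiener_def by simp
  have "(\<lambda>k. norm (g k * b (int m + k))) summable_on UNIV" for m
    using summable_on_cmult_left[OF g_abs, of K]
    by (rule summable_on_comparison_test) (auto simp: norm_mult intro!: mult_left_mono K)
  then have eq: "(\<Sum>\<^sub>\<infinity>k. g k * b (int m + k)) = (\<Sum>n. g (int_decode n) * b (int m + int_decode n))" for m
    by (rule infsum_int_eq_suminf[OF abs_summable_summable])
  have "(\<lambda>n. norm (g (int_decode n))) summable_on UNIV"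
    using summable_on_reindex_bij_betw[OF bij_int_decode, of "\<lambda>k. norm (g k)"] g_abs by simp
  then have major: "summable (\<lambda>n. norm (g (int_decode n)) * K)"
    by (intro summable_on_imp_summable summable_on_cmult_left)
  have "(\<lambda>m. \<Sum>n. g (int_decode n) * b (int m + int_decode n)) \<longlonglongrightarrow> (\<Sum>n. (0::complex))"
  proof (rule tannerys_theorem[THEN conjunct2, THEN conjunct2])
    show "(\<lambda>m. g (int_decode n) * b (int m + int_decode n)) \<longlonglongrightarrow> 0" for n
      by (rule tendsto_mult_right_zero[OF tendsto_int_add_const[OF b]])
    show "eventually (\<lambda>(n, m). norm (g (int_decode n) * b (int m + int_decode n))
        \<le> norm (g (int_decode n)) * K) (at_top \<times>\<^sub>F sequentially)"
      by (intro always_eventually allI) (simp add: case_prod_beta norm_mult mult_left_mono K)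
  qed (simp_all add: major)
  then show ?thesis unfolding eq by simp
qed

definition decaying_ideal :: "(nat \<Rightarrow> complex) \<Rightarrow> (int \<Rightarrow> complex) set" where
  "decaying_ideal \<phi> = {x \<in> Wiener. (\<lambda>m. dual_pairing \<phi> (shift_coeffs (int m) x)) \<longlonglongrightarrow> 0}"

lemma decaying_ideal_conv:
  assumes B: "\<And>k. norm (\<phi> k) \<le> B" and g: "g \<in> Wiener" and x: "x \<in> decaying_ideal \<phi>"
  shows "conv g x \<in> decaying_ideal \<phi>"
proof -
  have xW: "x \<in> Wiener" using x unfolding decaying_ideal_def by simp
  have "(\<lambda>m. \<Sum>\<^sub>\<infinity>k. g k * dual_pairing \<phi> (shift_coeffs (int m + k) x)) \<longlonglongrightarrow> 0"
  proof (rule conv_bounded_tendsto_zero[OF g])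
    show "norm (dual_pairing \<phi> (shift_coeffs j x)) \<le> B * Wnorm x" for j
      using norm_dual_pairing_le[of \<phi> B, OF B Wiener_shift_coeffs[OF xW]] by (simp add: Wnorm_shift_coeffs)
  qed (use x in \<open>simp add: decaying_ideal_def\<close>)
  then show ?thesis
    unfolding decaying_ideal_def
    by (simp add: dual_pairing_shift_conv[of \<phi> B, OF B g xW] Wiener_conv[OF g xW])
qed

lemma norm_dual_pairing_shift_diff_le:
  assumes B: "\<And>k. norm (\<phi> k) \<le> B" and x: "x \<in> Wiener" and y: "y \<in> Wiener"
  shows "norm (dual_pairing \<phi> (shift_coeffs j x) - dual_pairing \<phi> (shift_coeffs j y))
    \<le> B * Wnorm (\<lambda>n. x n - y n)"
proof -
  have "shift_coeffs j x = (\<lambda>n. shift_coeffs j y n + shift_coeffs j (\<lambda>n. x n - y n) n)"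
    by (simp add: shift_coeffs_def)
  then have "dual_pairing \<phi> (shift_coeffs j x) - dual_pairing \<phi> (shift_coeffs j y) =
      dual_pairing \<phi> (shift_coeffs j (\<lambda>n. x n - y n))"
    using dual_pairing_add[of \<phi> B, OF B Wiener_shift_coeffs[OF y] Wiener_shift_coeffs[OF Wiener_diff[OF x y]]]
    by simp
  then show ?thesis
    using norm_dual_pairing_le[of \<phi> B, OF B Wiener_shift_coeffs[OF Wiener_diff[OF x y]]]
    by (simp add: Wnorm_shift_coeffs)
qed

lemma Wclosed_decaying_ideal:
  assumes B: "\<And>k. norm (\<phi> k) \<le> B"
  shows "Wclosed (decaying_ideal \<phi>)"
  unfolding Wclosed_def
proof (intro allI impI)
  fix xs a assume xs: "\<forall>k. xs k \<in> decaying_ideal \<phi>" and aW: "a \<in> Wiener"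
    and lim: "(\<lambda>k. Wnorm (\<lambda>n. xs k n - a n)) \<longlonglongrightarrow> 0"
  have B0: "0 \<le> B" using norm_ge_zero order_trans B by blast
  have "(\<lambda>m. dual_pairing \<phi> (shift_coeffs (int m) a)) \<longlonglongrightarrow> 0"
  proof (rule tendsto_zero_uniform_approx)
    fix e :: real assume "e > 0"
    then have "e / (B + 1) > 0" using B0 by simp
    with lim have "eventually (\<lambda>k. Wnorm (\<lambda>n. xs k n - a n) < e / (B + 1)) sequentially"
      by (rule order_tendstoD)
    then obtain k where k: "Wnorm (\<lambda>n. xs k n - a n) < e / (B + 1)"
      unfolding eventually_sequentially by auto
    have xk: "xs k \<in> Wiener" using xs unfolding decaying_ideal_def by simp
    have "norm (dual_pairing \<phi> (shift_coeffs (int m) a) - dual_pairing \<phi> (shift_coeffs (int m) (xs k)))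
        \<le> e" for m
    proof -
      have "norm (dual_pairing \<phi> (shift_coeffs (int m) a) - dual_pairing \<phi> (shift_coeffs (int m) (xs k)))
          \<le> B * Wnorm (\<lambda>n. xs k n - a n)"
        using norm_dual_pairing_shift_diff_le[of \<phi> B, OF B aW xk] by (simp add: Wnorm_minus_commute)
      also have "\<dots> \<le> (B + 1) * (e / (B + 1))"
        using k B0 by (intro mult_mono) (auto simp: Wnorm_nonneg)
      finally show ?thesis using B0 by simp
    qed
    moreover have "(\<lambda>m. dual_pairing \<phi> (shift_coeffs (int m) (xs k))) \<longlonglongrightarrow> 0"
      using xs unfolding decaying_ideal_def by simp
    ultimately show "\<exists>g. (g \<longlongrightarrow> 0) sequentially \<and>
        (\<forall>m. norm (dual_pairing \<phi> (shift_coeffs (int m) a) - g m) \<le> e)"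
      by blast
  qed
  then show "a \<in> decaying_ideal \<phi>" unfolding decaying_ideal_def using aW by simp
qed

lemma closed_ideal_A_decaying_ideal:
  assumes B: "\<And>k. norm (\<phi> k) \<le> B"
  shows "closed_ideal_A (decaying_ideal \<phi>)"
proof -
  have add: "(\<lambda>n. x n + y n) \<in> decaying_ideal \<phi>"
    if x: "x \<in> decaying_ideal \<phi>" and y: "y \<in> decaying_ideal \<phi>" for x y
  proof -
    have xW: "x \<in> Wiener" and yW: "y \<in> Wiener" using x y unfolding decaying_ideal_def by auto
    have "dual_pairing \<phi> (shift_coeffs (int m) (\<lambda>n. x n + y n)) =
        dual_pairing \<phi> (shift_coeffs (int m) x) + dual_pairing \<phi> (shift_coeffs (int m) y)" for m
      unfolding shift_coeffs_add
      by (rule dual_pairing_add[of \<phi> B, OF B Wiener_shift_coeffs[OF xW] Wiener_shift_coeffs[OF yW]])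
    moreover have "(\<lambda>m. dual_pairing \<phi> (shift_coeffs (int m) x) + dual_pairing \<phi> (shift_coeffs (int m) y))
        \<longlonglongrightarrow> 0"
      using x y unfolding decaying_ideal_def by (intro tendsto_add_zero) auto
    ultimately show ?thesis unfolding decaying_ideal_def using Wiener_add[OF xW yW] by simp
  qed
  have cmult: "(\<lambda>n. c * x n) \<in> decaying_ideal \<phi>" if x: "x \<in> decaying_ideal \<phi>" for c x
  proof -
    have "(\<lambda>m. c * dual_pairing \<phi> (shift_coeffs (int m) x)) \<longlonglongrightarrow> 0"
      using x unfolding decaying_ideal_def by (intro tendsto_mult_right_zero) auto
    with x show ?thesis
      unfolding decaying_ideal_def by (simp add: shift_coeffs_cmult dual_pairing_cmult Wiener_cmult)
  qed
  show ?thesis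
    unfolding closed_ideal_A_def
  proof (intro conjI ballI allI)
    show "decaying_ideal \<phi> \<subseteq> Wiener" unfolding decaying_ideal_def by blast
    show "(\<lambda>n. 0) \<in> decaying_ideal \<phi>"
      by (simp add: decaying_ideal_def Wiener_def shift_coeffs_def)
    show "conv g x \<in> decaying_ideal \<phi>" if "g \<in> Wiener" "x \<in> decaying_ideal \<phi>" for g x
      using decaying_ideal_conv[of \<phi> B, OF B that] .
    show "Wclosed (decaying_ideal \<phi>)"
      using Wclosed_decaying_ideal[of \<phi> B, OF B] .
  qed (fact add cmult)+
qed

definition annihilator :: "(int \<Rightarrow> complex) set \<Rightarrow> (nat \<Rightarrow> complex) set" where
  "annihilator M = {\<phi>. bounded (range \<phi>) \<and> (\<forall>x\<in>M. dual_pairing \<phi> x = 0)}"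

lemma annihilator_bounded: "\<phi> \<in> annihilator M \<Longrightarrow> \<exists>B. \<forall>k. norm (\<phi> k) \<le> B"
  unfolding annihilator_def Elementary_Metric_Spaces.bounded_iff by blast

lemma IA_subset_decaying_ideal:
  assumes I: "closed_ideal_Aplus I" and \<phi>: "\<phi> \<in> annihilator I"
  shows "IA I \<subseteq> decaying_ideal \<phi>"
proof -
  obtain B where B: "\<And>k. norm (\<phi> k) \<le> B" using annihilator_bounded[OF \<phi>] by blast
  have "I \<subseteq> decaying_ideal \<phi>"
  proof
    fix x assume x: "x \<in> I"
    have "dual_pairing \<phi> (shift_coeffs (int m) x) = 0" for m
    proof -
      have "conv (\<lambda>n. if n = int m then 1 else 0) x \<in> I"
        using closed_ideal_AplusD(3)[OF I delta_Aplus x] .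
      with \<phi> show ?thesis unfolding annihilator_def conv_delta by blast
    qed
    moreover have "x \<in> Wiener" using closed_ideal_AplusD(1)[OF I] x Aplus_Wiener by blast
    ultimately show "x \<in> decaying_ideal \<phi>" unfolding decaying_ideal_def by simp
  qed
  with closed_ideal_A_decaying_ideal[of \<phi> B, OF B] show ?thesis unfolding IA_def by blast
qed

section \<open>Hahn--Banach separation in \<open>A\<^sup>+\<close>\<close>

definition Wnorm_dominated :: "((int \<Rightarrow> complex) \<times> real) set \<Rightarrow> bool" where
  "Wnorm_dominated G \<longleftrightarrow> (\<forall>(u, y)\<in>G. y \<le> Wnorm u)"

text \<open>The core of the Hahn--Banach step: \<open>r\<close> is squeezed between \<open>y - \<parallel>u - w\<parallel>\<close> and \<open>\<parallel>u' + w\<parallel> - y'\<close>,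
  which is possible since \<open>y + y' \<le> \<parallel>u + u'\<parallel> \<le> \<parallel>u - w\<parallel> + \<parallel>u' + w\<parallel>\<close>.\<close>
lemma Wnorm_dominated_extension_unit:
  assumes G_Wiener: "\<And>u y. (u, y) \<in> G \<Longrightarrow> u \<in> Wiener" and w: "w \<in> Wiener" and "G \<noteq> {}"
    and G_add: "\<And>u y u' y'. (u, y) \<in> G \<Longrightarrow> (u', y') \<in> G \<Longrightarrow> ((\<lambda>n. u n + u' n), y + y') \<in> G"
    and dom: "Wnorm_dominated G"
  shows "\<exists>r. \<forall>(u, y)\<in>G. y + r \<le> Wnorm (\<lambda>n. u n + w n) \<and> y - r \<le> Wnorm (\<lambda>n. u n - w n)"
proof -
  have sep: "y - Wnorm (\<lambda>n. u n - w n) \<le> Wnorm (\<lambda>n. u' n + w n) - y'"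
    if uy: "(u, y) \<in> G" and uy': "(u', y') \<in> G" for u y u' y'
  proof -
    have "y + y' \<le> Wnorm (\<lambda>n. (u n - w n) + (u' n + w n))"
      using dom G_add[OF uy uy'] unfolding Wnorm_dominated_def by auto
    also have "\<dots> \<le> Wnorm (\<lambda>n. u n - w n) + Wnorm (\<lambda>n. u' n + w n)"
      using G_Wiener[OF uy] G_Wiener[OF uy'] w by (intro Wnorm_add_le Wiener_diff Wiener_add)
    finally show ?thesis by simp
  qed
  define L where "L = {y - Wnorm (\<lambda>n. u n - w n) | u y. (u, y) \<in> G}"
  have "L \<noteq> {}" unfolding L_def using \<open>G \<noteq> {}\<close> by auto
  have "bdd_above L" unfolding L_def bdd_above_def using sep \<open>G \<noteq> {}\<close> by fast
  have "y - Wnorm (\<lambda>n. u n - w n) \<le> Sup L" "Sup L \<le> Wnorm (\<lambda>n. u n + w n) - y"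
    if uy: "(u, y) \<in> G" for u y
    using \<open>bdd_above L\<close> \<open>L \<noteq> {}\<close> sep uy by (auto simp: L_def intro!: cSup_upper cSup_least)
  then show ?thesis by (intro exI[of _ "Sup L"]) force
qed

text \<open>One step of the Hahn--Banach extension, for a real-linear functional given by its graph \<open>G\<close>.\<close>
lemma Wnorm_dominated_extension:
  assumes G_Wiener: "\<And>u y. (u, y) \<in> G \<Longrightarrow> u \<in> Wiener" and w: "w \<in> Wiener" and "G \<noteq> {}"
    and G_add: "\<And>u y u' y'. (u, y) \<in> G \<Longrightarrow> (u', y') \<in> G \<Longrightarrow> ((\<lambda>n. u n + u' n), y + y') \<in> G"
    and G_scale: "\<And>u y c. (u, y) \<in> G \<Longrightarrow> ((\<lambda>n. of_real c * u n), c * y) \<in> G"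
    and dom: "Wnorm_dominated G"
  shows "\<exists>r. \<forall>(u, y)\<in>G. \<forall>\<sigma>. y + \<sigma> * r \<le> Wnorm (\<lambda>n. u n + of_real \<sigma> * w n)"
proof -
  have "\<exists>r. \<forall>(u, y)\<in>G. y + r \<le> Wnorm (\<lambda>n. u n + w n) \<and> y - r \<le> Wnorm (\<lambda>n. u n - w n)"
    by (rule Wnorm_dominated_extension_unit) (fact G_Wiener w \<open>G \<noteq> {}\<close> G_add dom)+
  then obtain r where r: "\<And>u y. (u, y) \<in> G \<Longrightarrow> y + r \<le> Wnorm (\<lambda>n. u n + w n) \<and> y - r \<le> Wnorm (\<lambda>n. u n - w n)"
    by blast
  have unit: "y + \<epsilon> * r \<le> Wnorm (\<lambda>n. u n + of_real \<epsilon> * w n)"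
    if uy: "(u, y) \<in> G" and \<epsilon>: "\<epsilon> = 1 \<or> \<epsilon> = -1" for u y \<epsilon>
    using r[OF uy] \<epsilon> by auto
  have "y + \<sigma> * r \<le> Wnorm (\<lambda>n. u n + of_real \<sigma> * w n)" if uy: "(u, y) \<in> G" for u y \<sigma>
  proof (cases "\<sigma> = 0")
    case True
    then show ?thesis using dom uy unfolding Wnorm_dominated_def by auto
  next
    case False
    define c where "c = \<bar>\<sigma>\<bar>"
    have c: "c > 0" "\<sigma> / c = 1 \<or> \<sigma> / c = -1" using False by (auto simp: c_def abs_if)
    have "c * (y / c + \<sigma> / c * r) \<le> c * Wnorm (\<lambda>n. of_real (1 / c) * u n + of_real (\<sigma> / c) * w n)"
      using unit[OF G_scale[OF uy, of "1 / c"] c(2)] c(1) by simp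
    also have "\<dots> = Wnorm (\<lambda>n. of_real c * (of_real (1 / c) * u n + of_real (\<sigma> / c) * w n))"
      using c(1) by (simp add: Wnorm_cmult)
    also have "(\<lambda>n. of_real c * (of_real (1 / c) * u n + of_real (\<sigma> / c) * w n)) =
        (\<lambda>n. u n + of_real \<sigma> * w n)"
      using c(1) by (auto simp: fun_eq_iff field_simps)
    finally show ?thesis using c(1) by (simp add: distrib_left)
  qed
  then show ?thesis by blast
qed

lemma Wnorm_dominated_abs:
  assumes "Wnorm_dominated G" "(u, y) \<in> G" "((\<lambda>n. - u n), - y) \<in> G"
  shows "\<bar>y\<bar> \<le> Wnorm u"
proof -
  have "y \<le> Wnorm u" "- y \<le> Wnorm (\<lambda>n. - u n)"
    using assms unfolding Wnorm_dominated_def by auto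
  moreover have "Wnorm (\<lambda>n. - u n) = Wnorm u"
    using Wnorm_cmult[of "-1" u] by simp
  ultimately show ?thesis by linarith
qed

text \<open>\<open>e\<^sub>0, i e\<^sub>0, e\<^sub>1, i e\<^sub>1, \<dots>\<close>: a real basis of the finitely supported elements of \<open>A\<^sup>+\<close>.\<close>
definition real_basis :: "nat \<Rightarrow> int \<Rightarrow> complex" where
  "real_basis j = (\<lambda>n. if n = int (j div 2) then (if even j then 1 else \<i>) else 0)"

lemma Wiener_real_basis: "real_basis j \<in> Wiener"
  by (rule Wiener_finite_support[of "{int (j div 2)}"]) (auto simp: real_basis_def)

lemma Wnorm_real_basis: "Wnorm (real_basis j) = 1"
proof -
  have "Wnorm (real_basis j) = (\<Sum>\<^sub>\<infinity>n\<in>{int (j div 2)}. norm (real_basis j n))"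
    unfolding Wnorm_def by (rule infsum_cong_neutral) (auto simp: real_basis_def)
  then show ?thesis by (simp add: real_basis_def)
qed

definition real_coords :: "(int \<Rightarrow> complex) \<Rightarrow> nat \<Rightarrow> real" where
  "real_coords x j = (if even j then Re (x (int (j div 2))) else Im (x (int (j div 2))))"

lemma sum_real_coords_real_basis:
  "(\<Sum>j<2 * N. of_real (real_coords x j) * real_basis j n) = truncation N x n"
  unfolding truncation_def
proof (induction N)
  case (Suc N)
  have "(\<Sum>j<2 * Suc N. of_real (real_coords x j) * real_basis j n) =
      (\<Sum>j<2 * N. of_real (real_coords x j) * real_basis j n) + of_real (real_coords x (2 * N)) * real_basis (2 * N) n
      + of_real (real_coords x (Suc (2 * N))) * real_basis (Suc (2 * N)) n"
    by simp
  also have "\<dots> = (if 0 \<le> n \<and> n < int (Suc N) then x n else 0)"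
    unfolding Suc.IH by (auto simp: real_coords_def real_basis_def complex_eq_iff)
  finally show ?case .
qed auto

text \<open>The graph of the real-linear functional on the span of \<open>M\<close>, \<open>h\<close> and the first \<open>N\<close> basis vectors
  that vanishes on \<open>M\<close>, is \<open>d\<close> at \<open>h\<close> and \<open>a j\<close> at \<open>real_basis j\<close>. Domination by \<open>Wnorm\<close> makes it
  single-valued, so no linear independence is needed.\<close>
definition extension_graph ::
    "(int \<Rightarrow> complex) set \<Rightarrow> (int \<Rightarrow> complex) \<Rightarrow> real \<Rightarrow> (nat \<Rightarrow> real) \<Rightarrow> nat \<Rightarrow>
      ((int \<Rightarrow> complex) \<times> real) set" where
  "extension_graph M h d a N =
    {((\<lambda>n. m n + of_real t * h n + (\<Sum>j<N. of_real (s j) * real_basis j n)), t * d + (\<Sum>j<N. s j * a j)) | m t s.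
     m \<in> M}"

lemma extension_graph_cong:
  "(\<And>j. j < N \<Longrightarrow> a j = b j) \<Longrightarrow> extension_graph M h d a N = extension_graph M h d b N"
  unfolding extension_graph_def by (metis (no_types, lifting) lessThan_iff sum.cong)

lemma extension_graph_Suc_subset:
  "extension_graph M h d (a(N := r)) (Suc N) \<subseteq>
    {((\<lambda>n. u n + of_real \<sigma> * real_basis N n), y + \<sigma> * r) | u y \<sigma>. (u, y) \<in> extension_graph M h d a N}"
proof
  fix p assume "p \<in> extension_graph M h d (a(N := r)) (Suc N)"
  then obtain m t s where "m \<in> M"
    and p: "p = ((\<lambda>n. m n + of_real t * h n + (\<Sum>j<Suc N. of_real (s j) * real_basis j n)),
      t * d + (\<Sum>j<Suc N. s j * (a(N := r)) j))"
    unfolding extension_graph_def by blast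
  define u where "u = (\<lambda>n. m n + of_real t * h n + (\<Sum>j<N. of_real (s j) * real_basis j n))"
  define y where "y = t * d + (\<Sum>j<N. s j * a j)"
  have "(u, y) \<in> extension_graph M h d a N"
    using \<open>m \<in> M\<close> unfolding extension_graph_def u_def y_def by blast
  moreover have "(\<Sum>j<N. s j * (a(N := r)) j) = (\<Sum>j<N. s j * a j)" by (intro sum.cong) auto
  then have "p = ((\<lambda>n. u n + of_real (s N) * real_basis N n), y + s N * r)"
    unfolding p u_def y_def by (simp add: add.assoc)
  ultimately show "p \<in> {((\<lambda>n. u n + of_real \<sigma> * real_basis N n), y + \<sigma> * r) | u y \<sigma>.
      (u, y) \<in> extension_graph M h d a N}"
    by blast
qed

text \<open>The complex functional \<open>x \<mapsto> \<ell> x - i \<ell> (i x)\<close> of the real functional \<open>\<ell>\<close> taking the values \<open>A\<close>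
  on \<open>real_basis\<close>.\<close>
definition complex_functional :: "(nat \<Rightarrow> real) \<Rightarrow> nat \<Rightarrow> complex" where
  "complex_functional A k = of_real (A (2 * k)) - \<i> * of_real (A (Suc (2 * k)))"

lemma sum_real_coords_complex_functional:
  "(\<Sum>j<2 * N. real_coords x j * A j) = Re (\<Sum>k<N. complex_functional A k * x (int k))"
  by (induction N) (simp_all add: real_coords_def complex_functional_def algebra_simps)

locale separation_setup =
  fixes M :: "(int \<Rightarrow> complex) set" and h :: "int \<Rightarrow> complex" and d :: real
  assumes subspace: "coeff_subspace M" and M_Aplus: "M \<subseteq> Aplus" and h_Aplus: "h \<in> Aplus"
    and d_pos: "0 < d" and dist: "\<And>m. m \<in> M \<Longrightarrow> d \<le> Wnorm (\<lambda>n. m n + h n)"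
begin

lemma zero_mem: "(\<lambda>n. 0) \<in> M"
  and add_mem: "x \<in> M \<Longrightarrow> y \<in> M \<Longrightarrow> (\<lambda>n. x n + y n) \<in> M"
  and cmult_mem: "x \<in> M \<Longrightarrow> (\<lambda>n. c * x n) \<in> M"
  using subspace unfolding coeff_subspace_def by blast+

lemma extension_graph_Wiener:
  "(u, y) \<in> extension_graph M h d a N \<Longrightarrow> u \<in> Wiener"
proof -
  have "m \<in> Wiener" if "m \<in> M" for m using that M_Aplus Aplus_Wiener by blast
  moreover have "h \<in> Wiener" using h_Aplus by (rule Aplus_Wiener)
  ultimately show "(u, y) \<in> extension_graph M h d a N \<Longrightarrow> u \<in> Wiener"
    unfolding extension_graph_def by (auto intro!: Wiener_add Wiener_cmult Wiener_sum Wiener_real_basis)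
qed

lemma extension_graph_add:
  assumes "(u, y) \<in> extension_graph M h d a N" "(u', y') \<in> extension_graph M h d a N"
  shows "((\<lambda>n. u n + u' n), y + y') \<in> extension_graph M h d a N"
proof -
  obtain m t s where "m \<in> M"
    and u: "u = (\<lambda>n. m n + of_real t * h n + (\<Sum>j<N. of_real (s j) * real_basis j n))"
    and y: "y = t * d + (\<Sum>j<N. s j * a j)"
    using assms(1) unfolding extension_graph_def by blast
  obtain m' t' s' where "m' \<in> M"
    and u': "u' = (\<lambda>n. m' n + of_real t' * h n + (\<Sum>j<N. of_real (s' j) * real_basis j n))"
    and y': "y' = t' * d + (\<Sum>j<N. s' j * a j)"
    using assms(2) unfolding extension_graph_def by blast
  show ?thesis
    unfolding extension_graph_def u y u' y'
    by (intro CollectI exI[of _ "\<lambda>n. m n + m' n"] exI[of _ "t + t'"] exI[of _ "\<lambda>j. s j + s' j"])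
       (auto simp: add_mem \<open>m \<in> M\<close> \<open>m' \<in> M\<close> algebra_simps sum.distrib)
qed

lemma extension_graph_scale:
  assumes "(u, y) \<in> extension_graph M h d a N"
  shows "((\<lambda>n. of_real c * u n), c * y) \<in> extension_graph M h d a N"
proof -
  obtain m t s where "m \<in> M"
    and u: "u = (\<lambda>n. m n + of_real t * h n + (\<Sum>j<N. of_real (s j) * real_basis j n))"
    and y: "y = t * d + (\<Sum>j<N. s j * a j)"
    using assms unfolding extension_graph_def by blast
  show ?thesis
    unfolding extension_graph_def u y
    by (intro CollectI exI[of _ "\<lambda>n. of_real c * m n"] exI[of _ "c * t"] exI[of _ "\<lambda>j. c * s j"])
       (auto simp: cmult_mem \<open>m \<in> M\<close> algebra_simps sum_distrib_left)
qed

lemma Wnorm_dominated_extension_graph_0: "Wnorm_dominated (extension_graph M h d a 0)"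
  unfolding Wnorm_dominated_def extension_graph_def
proof clarsimp
  fix m t assume m: "m \<in> M"
  show "t * d \<le> Wnorm (\<lambda>n. m n + of_real t * h n)"
  proof (cases "t > 0")
    case True
    have "t * d \<le> t * Wnorm (\<lambda>n. of_real (1 / t) * m n + h n)"
      using True dist[OF cmult_mem[OF m, where c = "of_real (1 / t)"]] by simp
    also have "\<dots> = Wnorm (\<lambda>n. of_real t * (of_real (1 / t) * m n + h n))"
      using True by (simp add: Wnorm_cmult)
    also have "(\<lambda>n. of_real t * (of_real (1 / t) * m n + h n)) = (\<lambda>n. m n + of_real t * h n)"
      using True by (auto simp: fun_eq_iff field_simps)
    finally show ?thesis .
  next
    case False
    then have "t * d \<le> 0" using d_pos by (simp add: mult_nonpos_nonneg)
    then show ?thesis using Wnorm_nonneg order_trans by blast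
  qed
qed

lemma exists_dominated_extension_step:
  assumes dom: "Wnorm_dominated (extension_graph M h d a N)"
  shows "\<exists>r. Wnorm_dominated (extension_graph M h d (a(N := r)) (Suc N))"
proof -
  have ne: "extension_graph M h d a N \<noteq> {}"
    using zero_mem unfolding extension_graph_def by blast
  have "\<exists>r. \<forall>(u, y)\<in>extension_graph M h d a N. \<forall>\<sigma>.
      y + \<sigma> * r \<le> Wnorm (\<lambda>n. u n + of_real \<sigma> * real_basis N n)"
    by (rule Wnorm_dominated_extension[OF _ Wiener_real_basis ne _ _ dom])
       (auto intro: extension_graph_Wiener extension_graph_add extension_graph_scale)
  then show ?thesis
    using extension_graph_Suc_subset[of M h d a N] unfolding Wnorm_dominated_def by blast
qed

lemma exists_dominated_extension: "\<exists>A. \<forall>N. Wnorm_dominated (extension_graph M h d A N)"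
proof -
  have "\<exists>f. \<forall>N. Wnorm_dominated (extension_graph M h d (f N) N) \<and> (\<forall>j<N. f (Suc N) j = f N j)"
  proof (rule dependent_nat_choice)
    show "\<exists>a. Wnorm_dominated (extension_graph M h d a 0)"
      using Wnorm_dominated_extension_graph_0 by blast
    fix a N assume "Wnorm_dominated (extension_graph M h d a N)"
    with exists_dominated_extension_step obtain r where "Wnorm_dominated (extension_graph M h d (a(N := r)) (Suc N))" by blast
    then show "\<exists>b. Wnorm_dominated (extension_graph M h d b (Suc N)) \<and> (\<forall>j<N. b j = a j)"
      by (intro exI[of _ "a(N := r)"]) auto
  qed
  then obtain f where f: "\<And>N. Wnorm_dominated (extension_graph M h d (f N) N)"
    and f_stable: "\<And>N j. j < N \<Longrightarrow> f (Suc N) j = f N j" by blast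
  define A where "A j = f (Suc j) j" for j
  have "f N j = A j" if "j < N" for N j
    using that by (induction N) (auto simp: A_def f_stable less_Suc_eq)
  then have "extension_graph M h d (f N) N = extension_graph M h d A N" for N
    by (rule extension_graph_cong)
  with f show ?thesis by metis
qed

lemma extension_graph_abs_le:
  assumes "Wnorm_dominated (extension_graph M h d a N)" "(u, y) \<in> extension_graph M h d a N"
  shows "\<bar>y\<bar> \<le> Wnorm u"
  using Wnorm_dominated_abs[OF assms] extension_graph_scale[OF assms(2), of "-1"] by simp

lemma norm_complex_functional_le:
  assumes dom: "\<And>N. Wnorm_dominated (extension_graph M h d A N)"
  shows "norm (complex_functional A k) \<le> 2"
proof -
  have "\<bar>A j\<bar> \<le> 1" for j
  proof -
    have "(\<Sum>i<Suc j. of_real (if i = j then 1 else 0) * real_basis i n) = real_basis j n" for n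
      by (simp add: if_distrib sum.delta' cong: if_cong)
    moreover have "(\<Sum>i<Suc j. (if i = j then 1 else 0) * A i) = A j"
      by (simp add: if_distrib sum.delta' cong: if_cong)
    ultimately have "(real_basis j, A j) \<in> extension_graph M h d A (Suc j)"
      unfolding extension_graph_def using zero_mem
      by (intro CollectI exI[of _ "\<lambda>n. 0"] exI[of _ 0] exI[of _ "\<lambda>i. if i = j then 1 else 0"]) simp
    from extension_graph_abs_le[OF dom this] show ?thesis by (simp add: Wnorm_real_basis)
  qed
  have "norm (complex_functional A k) \<le> norm (of_real (A (2 * k)) :: complex) + norm (\<i> * of_real (A (Suc (2 * k))))"
    unfolding complex_functional_def by (rule norm_triangle_ineq4)
  also have "\<dots> \<le> 1 + 1"
    using \<open>\<And>j. \<bar>A j\<bar> \<le> 1\<close> by (intro add_mono) (simp_all add: norm_mult)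
  finally show ?thesis by simp
qed

text \<open>The real part of the pairing is the limit of the functional on the truncations, which lie in the
  graphs; the tails are small in norm.\<close>
lemma Re_dual_pairing_complex_functional:
  assumes dom: "\<And>N. Wnorm_dominated (extension_graph M h d A N)"
    and xy: "(x, y) \<in> extension_graph M h d A 0" and x: "x \<in> Aplus"
  shows "Re (dual_pairing (complex_functional A) x) = y"
proof -
  let ?partial = "\<lambda>N. Re (\<Sum>k<N. complex_functional A k * x (int k))"
  let ?tail = "\<lambda>N n. x n - truncation N x n"
  obtain m t where "m \<in> M" and x_eq: "\<And>n. x n = m n + of_real t * h n" and y_eq: "y = t * d"
    using xy unfolding extension_graph_def by auto
  define s where "s j = - real_coords x j" for j
  have "(?tail N, y - ?partial N) \<in> extension_graph M h d A (2 * N)" for N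
  proof -
    have "(\<Sum>j<2 * N. of_real (s j) * real_basis j n) = - truncation N x n" for n
      using sum_real_coords_real_basis[where N = N and x = x and n = n] by (simp add: s_def sum_negf)
    then have "?tail N = (\<lambda>n. m n + of_real t * h n + (\<Sum>j<2 * N. of_real (s j) * real_basis j n))"
      by (simp add: x_eq[symmetric])
    moreover have "y - ?partial N = t * d + (\<Sum>j<2 * N. s j * A j)"
      using sum_real_coords_complex_functional[where N = N and x = x and A = A]
      by (simp add: y_eq s_def sum_negf)
    ultimately show ?thesis
      using \<open>m \<in> M\<close> unfolding extension_graph_def by blast
  qed
  then have "\<bar>y - ?partial N\<bar> \<le> Wnorm (?tail N)" for N
    by (rule extension_graph_abs_le[OF dom])
  then have "norm (?partial N - y) \<le> Wnorm (?tail N)" for N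
    by (simp add: abs_minus_commute)
  then have "(\<lambda>N. ?partial N - y) \<longlonglongrightarrow> 0"
    by (intro Lim_null_comparison[OF _ Wnorm_sub_truncation_tendsto_zero[OF x]] always_eventually allI)
  then have "?partial \<longlonglongrightarrow> y"
    by (rule LIM_zero_cancel)
  moreover have "?partial \<longlonglongrightarrow> Re (dual_pairing (complex_functional A) x)"
    using dual_pairing_sums[OF norm_complex_functional_le[OF dom] Aplus_Wiener[OF x]]
    unfolding sums_def by (intro tendsto_Re)
  ultimately show ?thesis using LIMSEQ_unique by blast
qed

lemma separating_functional: "\<exists>\<phi>\<in>annihilator M. dual_pairing \<phi> h \<noteq> 0"
proof -
  obtain A where dom: "\<And>N. Wnorm_dominated (extension_graph M h d A N)"
    using exists_dominated_extension by blast
  have in_graph: "((\<lambda>n. m n + of_real t * h n), t * d) \<in> extension_graph M h d A 0" if "m \<in> M" for m t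
    using that unfolding extension_graph_def by auto
  have Re_M: "Re (dual_pairing (complex_functional A) m) = 0" if "m \<in> M" for m
  proof -
    have "(m, 0) \<in> extension_graph M h d A 0" using in_graph[OF that, of 0] by simp
    with that M_Aplus show ?thesis using Re_dual_pairing_complex_functional[OF dom] by blast
  qed
  have "dual_pairing (complex_functional A) m = 0" if m: "m \<in> M" for m
    using Re_M[OF m] Re_M[OF cmult_mem[OF m, where c = \<i>]]
    by (simp add: dual_pairing_cmult complex_eq_iff)
  moreover have "bounded (range (complex_functional A))"
    using norm_complex_functional_le[OF dom] unfolding Elementary_Metric_Spaces.bounded_iff by blast
  moreover have "Re (dual_pairing (complex_functional A) h) = d"
  proof -
    have "(h, d) \<in> extension_graph M h d A 0" using in_graph[OF zero_mem, of 1] by simp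
    with h_Aplus show ?thesis using Re_dual_pairing_complex_functional[OF dom] by blast
  qed
  ultimately show ?thesis
    using d_pos unfolding annihilator_def by (intro bexI[of _ "complex_functional A"]) auto
qed

end

lemma Wclosed_dist_pos:
  assumes M: "Wclosed M" "coeff_subspace M" and h: "h \<in> Wiener" "h \<notin> M"
  shows "\<exists>d>0. \<forall>m\<in>M. d \<le> Wnorm (\<lambda>n. m n + h n)"
proof (rule ccontr)
  assume "\<not> ?thesis"
  then have "\<exists>m\<in>M. Wnorm (\<lambda>n. m n + h n) < 1 / Suc k" for k :: nat
    by (auto simp: not_le)
  then obtain ms where ms: "\<And>k. ms k \<in> M" "\<And>k. Wnorm (\<lambda>n. ms k n + h n) < 1 / Suc k"
    by metis
  define xs where "xs k = (\<lambda>n. - 1 * ms k n)" for k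
  have "xs k \<in> M" for k
    using M(2) ms(1) unfolding coeff_subspace_def xs_def by blast
  moreover have "(\<lambda>k. Wnorm (\<lambda>n. xs k n - h n)) \<longlonglongrightarrow> 0"
  proof (rule Lim_null_comparison)
    have "(\<lambda>n. xs k n - h n) = (\<lambda>n. - 1 * (ms k n + h n))" for k
      by (simp add: xs_def fun_eq_iff algebra_simps)
    then have "Wnorm (\<lambda>n. xs k n - h n) = Wnorm (\<lambda>n. ms k n + h n)" for k
      by (simp only: Wnorm_cmult) simp
    then show "eventually (\<lambda>k. norm (Wnorm (\<lambda>n. xs k n - h n)) \<le> 1 / real (Suc k)) sequentially"
      using ms(2) by (intro always_eventually allI) (simp add: Wnorm_nonneg less_imp_le)
    show "(\<lambda>k. 1 / real (Suc k)) \<longlonglongrightarrow> 0"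
      using LIMSEQ_inverse_real_of_nat by (simp add: inverse_eq_divide)
  qed
  ultimately have "h \<in> M" using M(1) h(1) unfolding Wclosed_def by blast
  with h(2) show False ..
qed

lemma Aplus_separation:
  assumes "coeff_subspace M" "M \<subseteq> Aplus" "Wclosed M" "h \<in> Aplus" "h \<notin> M"
  shows "\<exists>\<phi>\<in>annihilator M. dual_pairing \<phi> h \<noteq> 0"
proof -
  obtain d where "d > 0" "\<And>m. m \<in> M \<Longrightarrow> d \<le> Wnorm (\<lambda>n. m n + h n)"
    using Wclosed_dist_pos[OF assms(3,1) Aplus_Wiener[OF assms(4)] assms(5)] by blast
  with assms interpret separation_setup M h d by unfold_locales auto
  show ?thesis by (rule separating_functional)
qed

lemma closed_ideal_Aplus_mem_iff:
  assumes I: "closed_ideal_Aplus I" and h: "h \<in> Aplus"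
  shows "h \<in> I \<longleftrightarrow> (\<forall>\<phi>\<in>annihilator I. dual_pairing \<phi> h = 0)"
  using Aplus_separation[OF closed_ideal_AplusD(2,1,4)[OF I] h] unfolding annihilator_def by blast

lemma div_ideal_eq_annihilated:
  assumes I: "closed_ideal_Aplus I" and f: "f \<in> Aplus"
  shows "div_ideal I f = {g \<in> Aplus. \<forall>\<phi>\<in>annihilator I.
    (\<Sum>\<^sub>\<infinity>m. coeffs_plus g m * dual_pairing \<phi> (shift_coeffs (int m) f)) = 0}"
proof -
  have "dual_pairing \<phi> (conv f g) = (\<Sum>\<^sub>\<infinity>m. coeffs_plus g m * dual_pairing \<phi> (shift_coeffs (int m) f))"
    if \<phi>: "\<phi> \<in> annihilator I" and g: "g \<in> Aplus" for \<phi> g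
  proof -
    obtain B where B: "\<And>k. norm (\<phi> k) \<le> B" using annihilator_bounded[OF \<phi>] by blast
    show ?thesis by (rule dual_pairing_conv[of \<phi> B, OF B Aplus_Wiener[OF f] g])
  qed
  then show ?thesis
    unfolding div_ideal_def using closed_ideal_Aplus_mem_iff[OF I Aplus_conv[OF f]] by auto
qed

section \<open>Weak-* closedness\<close>

lemma coeffs_plus_image_Aplus: "coeffs_plus ` {g \<in> Aplus. P (coeffs_plus g)} = {x \<in> l1N. P x}"
proof (intro equalityI subsetI)
  fix x assume "x \<in> coeffs_plus ` {g \<in> Aplus. P (coeffs_plus g)}"
  then obtain g where g: "g \<in> Aplus" "P (coeffs_plus g)" and x: "x = coeffs_plus g" by blast
  have "(\<lambda>k. norm (g (int k))) summable_on UNIV"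
    using summable_on_nonneg_part g(1) unfolding Aplus_def Wiener_def by blast
  then show "x \<in> {x \<in> l1N. P x}" using g(2) unfolding x l1N_def coeffs_plus_def by simp
next
  fix x assume x: "x \<in> {x \<in> l1N. P x}"
  define g where "g n = (if 0 \<le> n then x (nat n) else 0)" for n
  have "(\<lambda>n. norm (g n)) summable_on range int"
    using x summable_on_reindex[of int UNIV "\<lambda>n. norm (g n)"] unfolding l1N_def by (simp add: g_def o_def)
  then have "g \<in> Wiener"
    unfolding Wiener_def mem_Collect_eq
    by (rule summable_on_cong_neutral[THEN iffD1, rotated -1]) (auto simp: g_def image_iff, presburger)
  then have "g \<in> Aplus" unfolding Aplus_def by (simp add: g_def)
  moreover have "coeffs_plus g = x" by (simp add: coeffs_plus_def g_def)
  ultimately show "x \<in> coeffs_plus ` {g \<in> Aplus. P (coeffs_plus g)}" using x by blast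
qed

lemma closedin_weakstar_l1N_common_zeros:
  assumes "\<And>c. c \<in> \<Psi> \<Longrightarrow> c \<longlonglongrightarrow> 0"
  shows "closedin weakstar_l1N {x \<in> l1N. \<forall>c\<in>\<Psi>. (\<Sum>\<^sub>\<infinity>n. x n * c n) = 0}"
proof -
  define T :: "(nat \<Rightarrow> complex) topology"
    where "T = topology_generated_by {{x. (\<Sum>\<^sub>\<infinity>n. x n * c n) \<in> U} | c U. c \<longlonglongrightarrow> 0 \<and> open U}"
  have "openin T {x. (\<Sum>\<^sub>\<infinity>n. x n * c n) \<in> - {0}}" if "c \<in> \<Psi>" for c
    unfolding T_def
    by (intro topology_generated_by_Basis CollectI exI[of _ c] exI[of _ "- {0}"] conjI refl
        assms[OF that] open_Compl closed_singleton)
  then have "openin T (\<Union>c\<in>\<Psi>. {x. (\<Sum>\<^sub>\<infinity>n. x n * c n) \<in> - {0}})" by blast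
  moreover have "topspace T = UNIV"
  proof -
    have "{x. (\<Sum>\<^sub>\<infinity>n. x n * 0) \<in> UNIV} \<in> {{x. (\<Sum>\<^sub>\<infinity>n. x n * c n) \<in> U} | c U. c \<longlonglongrightarrow> 0 \<and> open U}"
      by blast
    then show ?thesis unfolding T_def by auto
  qed
  moreover have "UNIV - {x. \<forall>c\<in>\<Psi>. (\<Sum>\<^sub>\<infinity>n. x n * c n) = 0} =
      (\<Union>c\<in>\<Psi>. {x. (\<Sum>\<^sub>\<infinity>n. x n * c n) \<in> - {0}})"
    by auto
  ultimately have "closedin T {x. \<forall>c\<in>\<Psi>. (\<Sum>\<^sub>\<infinity>n. x n * c n) = 0}"
    unfolding closedin_def by simp
  then show ?thesis
    unfolding weakstar_l1N_def T_def[symmetric] closedin_subtopology by blast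
qed

theorem lemma3p1:
  fixes I :: "(int \<Rightarrow> complex) set" and f :: "int \<Rightarrow> complex"
  assumes "closed_ideal_Aplus I"
    and "f \<in> Aplus"
    and "f \<in> IA I"
  shows "closedin weakstar_l1N (coeffs_plus ` div_ideal I f)"
proof -
  define \<Psi> where "\<Psi> = (\<lambda>\<phi> m. dual_pairing \<phi> (shift_coeffs (int m) f)) ` annihilator I"
  have "c \<longlonglongrightarrow> 0" if "c \<in> \<Psi>" for c
    using that assms(3) IA_subset_decaying_ideal[OF assms(1)] unfolding \<Psi>_def decaying_ideal_def by blast
  moreover define P where "P x \<longleftrightarrow> (\<forall>c\<in>\<Psi>. (\<Sum>\<^sub>\<infinity>n. x n * c n) = 0)" for x
  have "div_ideal I f = {g \<in> Aplus. P (coeffs_plus g)}"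
    unfolding div_ideal_eq_annihilated[OF assms(1,2)] P_def \<Psi>_def by auto
  then have "coeffs_plus ` div_ideal I f = {x \<in> l1N. P x}"
    by (simp add: coeffs_plus_image_Aplus)
  ultimately show ?thesis unfolding P_def by (simp add: closedin_weakstar_l1N_common_zeros)
qed

end
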